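(* Let $\alpha,\delta\in(0,1)$, $m=\alpha n$, $k>-\frac{\ln\left(\frac{2}{1+\delta}-1\right)}{\ln(1+\delta)}$, and let $\lambda^*<\frac12$ satisfy $H(\lambda^* )=\alpha\log_2(1+\delta)$. Then for all $\lambda<\lambda^*$, $$\lim_{n\to\infty}\sum_{1\le w\le\lambda n}\binom{n}{w}\frac{1}{2^m}\left(1+\left(1-2\frac{k\ln m}{m}\right)^w\right)^m=0.$$
   Context: $H(p)=-p\log_2p-(1-p)\log_2(1-p)$ is the binary entropy function; $\ln$ is the natural logarithm. *)

theory Defs
  imports Complex_Main
begin

definition bin_entropy :: "real \<Rightarrow> real" where
  "bin_entropy p = - p * log 2 p - (1 - p) * log 2 (1 - p)"

end

theory Submission
  imports Defs "HOL-Analysis.Analysis" "HOL-Real_Asymp.Real_Asymp"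
begin

text \<open>
  Put x = 1 - c with c = 2 k ln m / m and pick a threshold q in (0, 1). A summand with
  x^w \<ge> q is handled by concavity: on [q, 1] the mean (1 + u) / 2 lies below u^s, where
  q^s = (1 + q) / 2, and as ln x \<le> -c this bounds the summand by (n m^(-2ks))^w; these
  sum to O(n m^(-2ks)) = o(1) provided 2 k s > 1. A summand with x^w < q is at most
  C(n, w) ((1 + q) / 2)^m, and the binomial coefficients up to \<lambda>* n sum to at most
  2^(H(\<lambda>*) n) = (1 + \<delta>)^(\<alpha> n), so these contribute O(((1 + \<delta>) (1 + q) / 2)^(\<alpha> n)) = o(1)
  provided (1 + \<delta>) (1 + q) < 2. The lower bound on k is exactly what makes the two
  conditions on q compatible.
\<close>

definition halfway_exponent :: "real \<Rightarrow> real" where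
  "halfway_exponent q = ln (2 / (1 + q)) / ln (1 / q)"

lemma halfway_exponent_bounds:
  assumes "0 < q" "q < 1"
  shows "0 < halfway_exponent q" "halfway_exponent q < 1"
proof -
  have "0 < ln (2 / (1 + q))" "ln (2 / (1 + q)) < ln (1 / q)"
    using assms by (simp_all add: field_simps)
  then show "0 < halfway_exponent q" "halfway_exponent q < 1"
    unfolding halfway_exponent_def by simp_all
qed

lemma powr_halfway_exponent:
  assumes "0 < q" "q < 1"
  shows "q powr halfway_exponent q = (1 + q) / 2"
proof -
  have "halfway_exponent q * ln q = - ln (2 / (1 + q))"
    using assms by (simp add: halfway_exponent_def ln_div)
  then show ?thesis
    using assms by (simp add: powr_def exp_minus)
qed

text \<open>With \<open>s = halfway_exponent q\<close>, \<open>(1 + u) / 2\<close> is the chord of the concave map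
  \<open>u \<mapsto> u powr s\<close> over \<open>[q, 1]\<close>; we use convexity of its inverse \<open>v \<mapsto> v powr (1 / s)\<close>.\<close>

lemma mean_le_powr_halfway_exponent:
  assumes "0 < q" "q \<le> u" "u \<le> 1"
  shows "(1 + u) / 2 \<le> u powr halfway_exponent q"
proof (cases "q = 1")
  case True
  then show ?thesis using assms by simp
next
  case False
  then have q1: "q < 1" using assms by simp
  define s where "s = halfway_exponent q"
  define a where "a = (1 + q) / 2"
  define v where "v = u powr s"
  have s: "0 < s" "s < 1" using halfway_exponent_bounds[OF assms(1) q1] by (simp_all add: s_def)
  have u0: "0 < u" using assms by simp
  have qa: "q powr s = a" using powr_halfway_exponent[OF assms(1) q1] by (simp add: s_def a_def)
  have va: "a \<le> v" unfolding v_def qa[symmetric] using assms s by (simp add: powr_mono2)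
  have v1: "v \<le> 1" unfolding v_def using assms u0 s by (simp add: powr_le1)
  have a: "0 < a" "a < 1" using assms q1 by (simp_all add: a_def)
  have vp: "v powr (1 / s) = u" and ap: "a powr (1 / s) = q"
    unfolding v_def qa[symmetric] using u0 assms s by (simp_all add: powr_powr)
  define t where "t = (v - a) / (1 - a)"
  have t: "0 \<le> t" "t \<le> 1" unfolding t_def using va v1 a by (auto simp: divide_simps)
  have vt: "v = (1 - t) * a + t * 1" using a t_def by (simp add: field_simps)
  have "v powr (1 / s) \<le> (1 - t) * a powr (1 / s) + t * 1 powr (1 / s)"
    using convex_onD[OF powr_convex, of "1 / s" t a 1] s t a vt by simp
  then have "u \<le> (1 - t) * q + t" using vp ap by simp
  also have "(1 - t) * q + t = 2 * v - 1" unfolding vt a_def by (simp add: field_simps)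
  finally show ?thesis unfolding v_def s_def by simp
qed

lemma of_nat_binomial_le_power: "real (n choose w) \<le> real n ^ w"
proof (cases "w \<le> n")
  case True
  then show ?thesis using binomial_le_pow by (metis of_nat_le_iff of_nat_power)
next
  case False
  then show ?thesis by (simp add: binomial_eq_0)
qed

lemma binomial_term_le:
  fixes x c q :: real and n m w :: nat
  assumes "0 < x" "x < 1" "0 < q" "q < 1" "ln x \<le> - c"
  shows "real (n choose w) * (1 / 2 ^ m) * (1 + x ^ w) ^ m
     \<le> (real n * exp (- c * halfway_exponent q * m)) ^ w + real (n choose w) * ((1 + q) / 2) ^ m"
proof -
  define s where "s = halfway_exponent q"
  have s: "0 < s" using halfway_exponent_bounds assms(3,4) by (simp add: s_def)
  have term_eq: "real (n choose w) * (1 / 2 ^ m) * (1 + x ^ w) ^ m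
      = real (n choose w) * ((1 + x ^ w) / 2) ^ m"
    by (simp add: power_divide)
  have xw: "0 < x ^ w" "x ^ w \<le> 1" using assms(1,2) by (simp_all add: power_le_one)
  show ?thesis
  proof (cases "q \<le> x ^ w")
    case True
    have "(1 + x ^ w) / 2 \<le> (x ^ w) powr s"
      using mean_le_powr_halfway_exponent[OF assms(3) True xw(2)] by (simp add: s_def)
    also have "\<dots> = exp (s * w * ln x)" using assms(1) by (simp add: powr_def ln_realpow)
    also have "\<dots> \<le> exp (- c * s * w)"
      using mult_left_mono[OF assms(5), of "s * w"] s by (simp add: algebra_simps)
    finally have "((1 + x ^ w) / 2) ^ m \<le> exp (- c * s * w) ^ m"
      by (rule power_mono) (use xw in simp)
    also have "\<dots> = exp (- c * s * m) ^ w"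
      by (simp add: exp_of_nat_mult[symmetric] algebra_simps)
    finally have "real (n choose w) * ((1 + x ^ w) / 2) ^ m \<le> real n ^ w * exp (- c * s * m) ^ w"
      by (rule mult_mono[OF of_nat_binomial_le_power]) (use xw in auto)
    then show ?thesis
      unfolding term_eq s_def using assms(3) by (simp add: power_mult_distrib add_increasing2)
  next
    case False
    have "((1 + x ^ w) / 2) ^ m \<le> ((1 + q) / 2) ^ m"
      by (rule power_mono) (use False xw in auto)
    then show ?thesis
      unfolding term_eq by (simp add: mult_left_mono add_increasing)
  qed
qed

lemma two_powr_bin_entropy:
  assumes "0 < L" "L < 1"
  shows "2 powr (bin_entropy L * y) = (1 - L) powr (- y) * (L / (1 - L)) powr (- L * y)"
proof -
  have "bin_entropy L * y * ln 2 = - y * ln (1 - L) + - L * y * ln (L / (1 - L))"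
    using assms unfolding bin_entropy_def log_def by (simp add: ln_div field_simps)
  then show ?thesis
    using assms by (simp add: powr_def exp_add[symmetric])
qed

text \<open>Weight the \<open>w\<close>-th coefficient by \<open>\<theta> ^ w * \<theta> powr (- L * n) \<ge> 1\<close>, where
  \<open>\<theta> = L / (1 - L) \<le> 1\<close>, and complete the sum by the binomial theorem.\<close>

lemma sum_binomial_le_entropy:
  fixes L :: real and n N :: nat
  assumes "0 < L" "L \<le> 1/2" "real N \<le> L * n"
  shows "(\<Sum>w\<le>N. real (n choose w)) \<le> 2 powr (bin_entropy L * n)"
proof -
  define \<theta> where "\<theta> = L / (1 - L)"
  have \<theta>: "0 < \<theta>" "\<theta> \<le> 1" unfolding \<theta>_def using assms(1,2) by (auto simp: divide_simps)
  have "N \<le> n"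
    using assms mult_right_mono[of L 1 "real n"] by (simp add: of_nat_le_iff[symmetric] del: of_nat_le_iff)
  have weight: "1 \<le> \<theta> ^ w * \<theta> powr (- L * n)" if "w \<le> N" for w
  proof -
    have "\<theta> ^ w * \<theta> powr (- L * n) = \<theta> powr (real w - L * n)"
      using \<theta> by (simp add: powr_realpow[symmetric] powr_add[symmetric])
    moreover have "real w - L * n \<le> 0" using that assms(3) by linarith
    ultimately show ?thesis using \<theta> powr_mono'[of "real w - L * n" 0 \<theta>] by simp
  qed
  have "(\<Sum>w\<le>N. real (n choose w)) \<le> (\<Sum>w\<le>N. real (n choose w) * \<theta> ^ w) * \<theta> powr (- L * n)"
    unfolding sum_distrib_right
    by (intro sum_mono) (use weight in \<open>simp add: mult.assoc mult_le_cancel_left1\<close>)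
  also have "\<dots> \<le> (\<Sum>w\<le>n. real (n choose w) * \<theta> ^ w) * \<theta> powr (- L * n)"
    by (intro mult_right_mono sum_mono2) (use \<open>N \<le> n\<close> \<theta> in auto)
  also have "\<dots> = (1 - L) powr (- real n) * \<theta> powr (- L * n)"
    using binomial_ring[of \<theta> 1 n] assms(1,2)
    by (simp add: \<theta>_def powr_minus_divide powr_realpow field_simps)
  also have "\<dots> = 2 powr (bin_entropy L * n)"
    using two_powr_bin_entropy[of L "real n"] assms(1,2) by (simp add: \<theta>_def)
  finally show ?thesis .
qed

lemma sum_power_atLeast1_le:
  fixes r :: real
  assumes "0 \<le> r" "r \<le> 1/2"
  shows "(\<Sum>w\<in>{1..N}. r ^ w) \<le> 2 * r"
proof -
  have "(\<Sum>w\<in>{1..N}. r ^ w) = r * (\<Sum>i<N. r ^ i)"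
    by (induction N) (auto simp: sum_distrib_left distrib_left)
  also have "(\<Sum>i<N. r ^ i) = (1 - r ^ N) / (1 - r)"
    using assms by (simp add: sum_gp_strict)
  also have "\<dots> \<le> 1 / (1 - r)"
    using assms by (simp add: divide_right_mono)
  also have "\<dots> \<le> 2"
    using assms by (simp add: field_simps)
  finally show ?thesis using assms by (simp add: mult_left_mono)
qed

lemma binomial_sum_le:
  fixes c q L :: real and n m N :: nat
  defines "r \<equiv> real n * exp (- c * halfway_exponent q * m)"
  assumes "0 < c" "c < 1" "0 < q" "q < 1" "0 < L" "L \<le> 1/2" "real N \<le> L * n" "r \<le> 1/2"
  shows "(\<Sum>w\<in>{1..N}. real (n choose w) * (1 / 2 ^ m) * (1 + (1 - c) ^ w) ^ m)
    \<le> 2 * r + ((1 + q) / 2) ^ m * 2 powr (bin_entropy L * n)"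
proof -
  have "(\<Sum>w\<in>{1..N}. real (n choose w) * (1 / 2 ^ m) * (1 + (1 - c) ^ w) ^ m)
      \<le> (\<Sum>w\<in>{1..N}. r ^ w + real (n choose w) * ((1 + q) / 2) ^ m)"
    unfolding r_def
    by (intro sum_mono binomial_term_le) (use assms ln_le_minus_one[of "1 - c"] in auto)
  also have "\<dots> = (\<Sum>w\<in>{1..N}. r ^ w) + ((1 + q) / 2) ^ m * (\<Sum>w\<in>{1..N}. real (n choose w))"
    by (simp add: sum.distrib sum_distrib_left mult.commute)
  also have "\<dots> \<le> 2 * r + ((1 + q) / 2) ^ m * 2 powr (bin_entropy L * n)"
  proof (intro add_mono mult_left_mono)
    show "(\<Sum>w\<in>{1..N}. r ^ w) \<le> 2 * r"
      by (rule sum_power_atLeast1_le) (use assms in auto)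
    have "(\<Sum>w\<in>{1..N}. real (n choose w)) \<le> (\<Sum>w\<le>N. real (n choose w))"
      by (rule sum_mono2) auto
    also have "\<dots> \<le> 2 powr (bin_entropy L * n)"
      by (rule sum_binomial_le_entropy) (use assms in auto)
    finally show "(\<Sum>w\<in>{1..N}. real (n choose w)) \<le> 2 powr (bin_entropy L * n)" .
  qed (use assms in simp)
  finally show ?thesis .
qed

lemma binomial_sum_log_le:
  fixes k q L :: real and n m N :: nat
  defines "c \<equiv> 2 * (k * ln (real m) / real m)"
    and "r \<equiv> real n * real m powr - (2 * k * halfway_exponent q)"
  assumes m: "2 \<le> real m" and "0 < k" "c < 1" "0 < q" "q < 1" "0 < L" "L \<le> 1/2"
    and "real N \<le> L * n" "r \<le> 1/2"
  shows "(\<Sum>w\<in>{1..N}. real (n choose w) * (1 / 2 ^ m) * (1 + (1 - c) ^ w) ^ m)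
    \<le> 2 * r + ((1 + q) / 2) ^ m * 2 powr (bin_entropy L * n)"
proof -
  have "exp (- c * halfway_exponent q * m) = real m powr - (2 * k * halfway_exponent q)"
    using m by (simp add: c_def powr_def)
  then show ?thesis
    using binomial_sum_le[of c q L N n m] assms by (simp add: r_def)
qed

lemma of_nat_nat_floor_le: "a \<le> b \<Longrightarrow> 0 \<le> b \<Longrightarrow> real (nat \<lfloor>a\<rfloor>) \<le> b"
  by (cases "a < 0") (auto intro: order_trans[OF of_int_floor_le])

text \<open>Take \<open>q = q\<^sub>0\<^sup>2\<close>, where \<open>q\<^sub>0 = 2 / (1 + \<delta>) - 1\<close> solves \<open>(1 + \<delta>)(1 + q\<^sub>0) = 2\<close>; then
  \<open>2 k s = k ln (2 / (1 + q)) / ln (1 / q\<^sub>0) > k ln (1 + \<delta>) / ln (1 / q\<^sub>0) > 1\<close>.\<close>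

lemma exists_halfway_parameter:
  fixes \<delta> k :: real
  assumes "0 < \<delta>" "\<delta> < 1" "k > - ln (2 / (1 + \<delta>) - 1) / ln (1 + \<delta>)"
  shows "\<exists>q. 0 < q \<and> q < 1 \<and> (1 + \<delta>) * (1 + q) < 2 \<and> 2 * k * halfway_exponent q > 1"
proof (intro exI conjI)
  define q\<^sub>0 where "q\<^sub>0 = 2 / (1 + \<delta>) - 1"
  have q\<^sub>0: "0 < q\<^sub>0" "q\<^sub>0 < 1" "(1 + \<delta>) * (1 + q\<^sub>0) = 2"
    unfolding q\<^sub>0_def using assms(1,2) by (auto simp: field_simps)
  have "q\<^sub>0\<^sup>2 < q\<^sub>0"
    using mult_strict_left_mono[of q\<^sub>0 1 q\<^sub>0] q\<^sub>0 by (simp add: power2_eq_square)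
  then have q: "0 < q\<^sub>0\<^sup>2" "q\<^sub>0\<^sup>2 < 1" "q\<^sub>0\<^sup>2 < q\<^sub>0"
    using q\<^sub>0 by auto
  then show "0 < q\<^sub>0\<^sup>2" "q\<^sub>0\<^sup>2 < 1" by simp_all
  show close: "(1 + \<delta>) * (1 + q\<^sub>0\<^sup>2) < 2"
    using q\<^sub>0(3) q(3) assms(1) by (smt (verit) mult_strict_left_mono)
  have ln_pos: "0 < ln (1 + \<delta>)" "0 < ln (1 / q\<^sub>0)" using assms(1) q\<^sub>0 by simp_all
  have "ln (1 / q\<^sub>0) / ln (1 + \<delta>) < k"
    using assms(3) q\<^sub>0(1) by (simp add: q\<^sub>0_def[symmetric] ln_div)
  then have "ln (1 / q\<^sub>0) < k * ln (1 + \<delta>)"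
    using ln_pos by (simp add: pos_divide_less_eq)
  then have k: "0 < k" using ln_pos by (smt (verit) zero_less_mult_iff)
  have "1 + \<delta> < 2 / (1 + q\<^sub>0\<^sup>2)"
    using close by (simp add: pos_less_divide_eq add_pos_nonneg)
  then have "ln (1 + \<delta>) < ln (2 / (1 + q\<^sub>0\<^sup>2))"
    using assms(1) by (simp add: add_pos_nonneg)
  then have "ln (1 / q\<^sub>0) < k * ln (2 / (1 + q\<^sub>0\<^sup>2))"
    using \<open>ln (1 / q\<^sub>0) < k * ln (1 + \<delta>)\<close> k by (smt (verit) mult_strict_left_mono)
  moreover have "ln (1 / q\<^sub>0\<^sup>2) = 2 * ln (1 / q\<^sub>0)"
    using q\<^sub>0 by (simp add: ln_div ln_realpow)
  ultimately show "2 * k * halfway_exponent (q\<^sub>0\<^sup>2) > 1"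
    using ln_pos by (simp add: halfway_exponent_def field_simps)
qed

lemma filterlim_nat_floor_mult_sequentially:
  fixes \<alpha> :: real
  assumes "0 < \<alpha>"
  shows "filterlim (\<lambda>n. nat \<lfloor>\<alpha> * real n\<rfloor>) sequentially sequentially"
  using assms
  by (intro filterlim_compose[OF filterlim_nat_sequentially] filterlim_compose[OF filterlim_floor_sequentially]
      filterlim_tendsto_pos_mult_at_top[OF tendsto_const _ filterlim_real_sequentially])

lemma eventually_log_ratio_lt:
  fixes k :: real
  assumes "0 < k"
  shows "\<forall>\<^sub>F m in sequentially. 2 \<le> real m \<and> 2 * (k * ln (real m) / real m) < 1"
proof -
  have "((\<lambda>m. ln (real m) / real m) \<longlongrightarrow> 0) sequentially"
    by real_asymp
  then have "\<forall>\<^sub>F m in sequentially. ln (real m) / real m < 1 / (2 * k)"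
    using assms by (simp add: order_tendstoD(2))
  then show ?thesis
    using eventually_ge_at_top[of "2::nat"]
    by eventually_elim (use assms in \<open>simp add: field_simps\<close>)
qed

lemma tendsto_of_nat_mult_nat_floor_powr:
  fixes \<alpha> b :: real
  assumes "0 < \<alpha>" "1 < b"
  shows "(\<lambda>n. real n * real (nat \<lfloor>\<alpha> * real n\<rfloor>) powr - b) \<longlonglongrightarrow> 0"
proof (rule tendsto_sandwich[OF _ _ tendsto_const])
  show "(\<lambda>n. real n * (\<alpha> * real n / 2) powr - b) \<longlonglongrightarrow> 0"
    using assms by real_asymp
  have "\<forall>\<^sub>F n in sequentially. 2 / \<alpha> \<le> real n"
    using filterlim_real_sequentially unfolding filterlim_at_top by blast
  then show "\<forall>\<^sub>F n in sequentially. real n * real (nat \<lfloor>\<alpha> * real n\<rfloor>) powr - b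
      \<le> real n * (\<alpha> * real n / 2) powr - b"
  proof eventually_elim
    case (elim n)
    then have "2 \<le> \<alpha> * real n" using assms(1) by (simp add: field_simps)
    then have "\<alpha> * real n / 2 \<le> real (nat \<lfloor>\<alpha> * real n\<rfloor>)" by linarith
    then show ?case
      using \<open>2 \<le> \<alpha> * real n\<close> assms by (intro mult_left_mono powr_mono2') auto
  qed
qed simp

lemma tendsto_power_nat_floor_mult_powr:
  fixes a b \<alpha> :: real
  assumes "0 < a" "a \<le> 1" "0 < b" "a * b < 1" "0 < \<alpha>"
  shows "(\<lambda>n. a ^ nat \<lfloor>\<alpha> * real n\<rfloor> * b powr (\<alpha> * real n)) \<longlonglongrightarrow> 0"
proof (rule tendsto_sandwich[OF _ _ tendsto_const])
  have "(a * b) powr \<alpha> < 1"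
    using assms by (simp add: powr_def mult_pos_neg)
  then have "(\<lambda>n. ((a * b) powr \<alpha>) ^ n / a) \<longlonglongrightarrow> 0"
    by (intro tendsto_divide_zero LIMSEQ_power_zero) simp
  moreover have "((a * b) powr \<alpha>) ^ n / a = a powr (\<alpha> * n - 1) * b powr (\<alpha> * n)" for n
    using assms
    by (simp add: powr_diff powr_mult powr_powr[symmetric] powr_realpow power_mult_distrib mult_ac)
  ultimately show "(\<lambda>n. a powr (\<alpha> * n - 1) * b powr (\<alpha> * n)) \<longlonglongrightarrow> 0" by simp
  have "a ^ nat \<lfloor>\<alpha> * real n\<rfloor> \<le> a powr (\<alpha> * n - 1)" for n
  proof -
    have "a ^ nat \<lfloor>\<alpha> * real n\<rfloor> = a powr real (nat \<lfloor>\<alpha> * real n\<rfloor>)"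
      using assms(1) by (simp add: powr_realpow)
    also have "\<dots> \<le> a powr (\<alpha> * n - 1)"
      by (rule powr_mono') (use assms in linarith)+
    finally show ?thesis .
  qed
  then show "\<forall>\<^sub>F n in sequentially. a ^ nat \<lfloor>\<alpha> * real n\<rfloor> * b powr (\<alpha> * real n)
      \<le> a powr (\<alpha> * n - 1) * b powr (\<alpha> * n)"
    by (intro always_eventually allI mult_right_mono) simp_all
qed (use assms(1) in \<open>simp add: always_eventually\<close>)

theorem lemma7:
  fixes \<alpha> \<delta> k lstar lam :: real
  assumes "0 < \<alpha>" "\<alpha> < 1" "0 < \<delta>" "\<delta> < 1"
    and "k > - ln (2 / (1 + \<delta>) - 1) / ln (1 + \<delta>)"
    and "0 < lstar" "lstar < 1/2"
    and "bin_entropy lstar = \<alpha> * log 2 (1 + \<delta>)"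
    and "lam < lstar"
  shows "(\<lambda>n. let m = nat \<lfloor>\<alpha> * real n\<rfloor> in
            \<Sum>w\<in>{1..nat \<lfloor>lam * real n\<rfloor>}.
              real (n choose w) * (1 / 2 ^ m) *
              (1 + (1 - 2 * (k * ln (real m) / real m)) ^ w) ^ m)
         \<longlonglongrightarrow> 0"
    (is "?S \<longlonglongrightarrow> 0")
proof -
  obtain q where q: "0 < q" "q < 1" "(1 + \<delta>) * (1 + q) < 2" and s: "2 * k * halfway_exponent q > 1"
    using exists_halfway_parameter assms(3-5) by blast
  have k: "0 < k" using s halfway_exponent_bounds[OF q(1,2)] by (smt (verit) mult_nonpos_nonneg)
  define M where "M n = nat \<lfloor>\<alpha> * real n\<rfloor>" for n
  define A where "A n = real n * real (M n) powr - (2 * k * halfway_exponent q)" for n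
  define B where "B n = ((1 + q) / 2) ^ M n * (1 + \<delta>) powr (\<alpha> * real n)" for n
  have A: "A \<longlonglongrightarrow> 0"
    unfolding A_def M_def using tendsto_of_nat_mult_nat_floor_powr assms(1) s by blast
  moreover have "B \<longlonglongrightarrow> 0"
    unfolding B_def M_def
    by (intro tendsto_power_nat_floor_mult_powr) (use q assms(1,3) in \<open>simp_all add: mult.commute\<close>)
  ultimately have bound_lim: "(\<lambda>n. 2 * A n + B n) \<longlonglongrightarrow> 0"
    by (metis add_0 mult_zero_right tendsto_add tendsto_mult_left)
  have "\<forall>\<^sub>F n in sequentially. 2 \<le> real (M n) \<and> 2 * (k * ln (real (M n)) / real (M n)) < 1"
    unfolding M_def using filterlim_nat_floor_mult_sequentially[OF assms(1)] eventually_log_ratio_lt[OF k]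
    by (rule filterlim_iff[THEN iffD1, rule_format])
  moreover have "\<forall>\<^sub>F n in sequentially. A n \<le> 1/2"
    using order_tendstoD(2)[OF A, of "1/2"] by (auto elim: eventually_mono)
  ultimately have "\<forall>\<^sub>F n in sequentially. 0 \<le> ?S n \<and> ?S n \<le> 2 * A n + B n"
  proof eventually_elim
    case (elim n)
    have "real (nat \<lfloor>lam * real n\<rfloor>) \<le> lstar * real n"
      using assms(6,9) by (intro of_nat_nat_floor_le mult_right_mono) auto
    moreover have "2 powr (bin_entropy lstar * n) = (1 + \<delta>) powr (\<alpha> * n)"
      using assms(3) powr_powr[of 2 "log 2 (1 + \<delta>)" "\<alpha> * n"] by (simp add: assms(8) mult_ac)
    ultimately have "?S n \<le> 2 * A n + B n"
      using binomial_sum_log_le[of "M n" k q lstar "nat \<lfloor>lam * real n\<rfloor>" n] k q(1,2) assms(6,7) elim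
      by (simp add: Let_def A_def B_def M_def)
    moreover have "0 \<le> ?S n"
      using elim by (auto simp: Let_def M_def intro!: sum_nonneg)
    ultimately show ?case by simp
  qed
  then show ?thesis
    by (intro tendsto_sandwich[OF _ _ tendsto_const bound_lim]) (auto elim: eventually_mono)
qed

end
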